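(* For every field $\mathbb{F}$, all $n,d\ge1$ and every tensor $A:[n]^{2d}\to\mathbb{F}$, we have $\mathcal L_{\mathsf{nc,sm}}(A^\flat)\ge n^{\log_2 d}\,\rho(A)$.
   Context: For $a,b\in\{0,1\}$ and $\alpha\in\{0,1\}^{d-1}$ define the partition $I_{a,\alpha,b}\sqcup J_{a,\alpha,b}=[2d]$ by $I_{a,\alpha,b}=[2d]\cap\{a,\,2+\alpha_1,\,4+\alpha_2,\dots,2d-2+\alpha_{d-1},\,2d+b\}$ and $J_{a,\alpha,b}=[2d]\cap\{1-a,\,3-\alpha_1,\,5-\alpha_2,\dots,2d-1-\alpha_{d-1},\,2d+1-b\}$. For $A:[n]^{2d}\to\mathbb{F}$ and a partition $I\sqcup J=[2d]$, $\mathrm{Mat}_{I,J}(A)$ is the $n^{|I|}\times n^{|J|}$ flattening (rows indexed by coordinates in $I$, columns by those in $J$). $\mathrm{relrk}_{a,\alpha,b}(A)=n^{-d}\mathrm{rank}(\mathrm{Mat}_{I_{a,\alpha,b},J_{a,\alpha,b}}(A))$, and \[\rho(A)=\max_{a,b\in\{0,1\}}\ \min_{\{X_\alpha\}}\ \sum_{\alpha\in\{0,1\}^{d-1}}\mathrm{relrk}_{a,\alpha,b}(X_\alpha),\] the minimum over families of tensors $X_\alpha:[n]^{2d}\to\mathbb{F}$ with $A=\sum_\alpha X_\alpha$. The flattening $A^\flat:[n^2]^d\to\mathbb{F}$ is $A^\flat(\langle a_1,b_1\rangle,\dots,\langle a_d,b_d\rangle)=A(a_1,b_1,\dots,a_d,b_d)$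 with $\langle a,b\rangle=(a-1)n+b$. Non-commutative set-multilinear formula size of $B:[N]^k\to\mathbb{F}$: if $k=1$, $\mathcal L_{\mathsf{nc,sm}}(B)=1$ if $B\ne0$ and $0$ otherwise; if $k\ge2$ it is the minimum of $\sum_i(\mathcal L_{\mathsf{nc,sm}}(B_i)+\mathcal L_{\mathsf{nc,sm}}(C_i))$ over finite families with positive $e_i+f_i=k$, $B_i:[N]^{e_i}\to\mathbb{F}$, $C_i:[N]^{f_i}\to\mathbb{F}$, $B=\sum_iB_i\otimes C_i$ (concatenating coordinates in order). *)

theory Defs
  imports Complex_Main "Jordan_Normal_Form.DL_Rank"
begin

text \<open>A tensor of order k over [N] = {1..N} is a function
  B :: nat list => 'a; only its values on lists of length k with entries in {1..N}
  (the domain, see tdom) are meaningful. Coordinates of a tensor are numbered 1..k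
  (position p of the index list is entry number p-1 of the list).\<close>

definition tdom :: "nat \<Rightarrow> nat \<Rightarrow> nat list set" where
  "tdom N k = {xs. length xs = k \<and> set xs \<subseteq> {1..N}}"

definition tprod :: "nat \<Rightarrow> (nat list \<Rightarrow> 'a::field) \<Rightarrow> (nat list \<Rightarrow> 'a) \<Rightarrow> nat list \<Rightarrow> 'a" where
  "tprod e B C = (\<lambda>xs. B (take e xs) * C (drop e xs))"

definition digit :: "nat \<Rightarrow> nat \<Rightarrow> nat \<Rightarrow> nat" where
  "digit n r j = r div n ^ j mod n + 1"

text \<open>Row r / column c of Mat_{I,J} (0-based) correspond to the assignments of
  values in [n] to the coordinates in I resp. J given by mixed-radix digits
  (the coordinates of I are ordered increasingly).\<close>
definition flat_index :: "nat \<Rightarrow> nat \<Rightarrow> nat set \<Rightarrow> nat set \<Rightarrow> nat \<Rightarrow> nat \<Rightarrow> nat list" where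
  "flat_index n k I J r c =
     map (\<lambda>p. if p \<in> I then digit n r (card {q \<in> I. q < p})
               else digit n c (card {q \<in> J. q < p})) [1..<k+1]"

definition Mat_flat :: "nat \<Rightarrow> nat \<Rightarrow> nat set \<Rightarrow> nat set \<Rightarrow> (nat list \<Rightarrow> 'a::field) \<Rightarrow> 'a mat" where
  "Mat_flat n k I J A = mat (n ^ card I) (n ^ card J) (\<lambda>(r, c). A (flat_index n k I J r c))"

definition mrank :: "'a::field mat \<Rightarrow> nat" where
  "mrank M = vec_space.rank (dim_row M) M"

text \<open>The partition I_{a,alpha,b}, J_{a,alpha,b} of [2d]; alpha is a 0/1 list of
  length d-1, alpha_i = alpha ! (i-1).\<close>
definition Ipart :: "nat \<Rightarrow> nat \<Rightarrow> nat list \<Rightarrow> nat \<Rightarrow> nat set" where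
  "Ipart d a \<alpha> b = {1..2*d} \<inter> ({a} \<union> {2*i + \<alpha> ! (i-1) | i. 1 \<le> i \<and> i \<le> d - 1} \<union> {2*d + b})"

definition Jpart :: "nat \<Rightarrow> nat \<Rightarrow> nat list \<Rightarrow> nat \<Rightarrow> nat set" where
  "Jpart d a \<alpha> b = {1..2*d} \<inter> ({1 - a} \<union> {2*i + 1 - \<alpha> ! (i-1) | i. 1 \<le> i \<and> i \<le> d - 1} \<union> {2*d + 1 - b})"

definition alphas :: "nat \<Rightarrow> nat list set" where
  "alphas d = {\<alpha>. length \<alpha> = d - 1 \<and> set \<alpha> \<subseteq> {0, 1}}"

definition relrk :: "nat \<Rightarrow> nat \<Rightarrow> nat \<Rightarrow> nat list \<Rightarrow> nat \<Rightarrow> (nat list \<Rightarrow> 'a::field) \<Rightarrow> real" where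
  "relrk n d a \<alpha> b A =
     real (mrank (Mat_flat n (2*d) (Ipart d a \<alpha> b) (Jpart d a \<alpha> b) A)) / real n ^ d"

definition rho :: "nat \<Rightarrow> nat \<Rightarrow> (nat list \<Rightarrow> 'a::field) \<Rightarrow> real" where
  "rho n d A = (MAX a \<in> {0, 1}. MAX b \<in> {0, 1}.
     (INF X \<in> {X :: nat list \<Rightarrow> nat list \<Rightarrow> 'a.
                 \<forall>xs \<in> tdom n (2*d). A xs = (\<Sum>\<alpha> \<in> alphas d. X \<alpha> xs)}.
        \<Sum>\<alpha> \<in> alphas d. relrk n d a \<alpha> b (X \<alpha>)))"

text \<open>The flattening A^flat : [n^2]^d -> F, using <a,b> = (a-1)n+b, i.e.
  y in [n^2] corresponds to a = (y-1) div n + 1, b = (y-1) mod n + 1.\<close>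
definition flatten :: "nat \<Rightarrow> (nat list \<Rightarrow> 'a) \<Rightarrow> nat list \<Rightarrow> 'a" where
  "flatten n A = (\<lambda>ys. A (concat (map (\<lambda>y. [(y - 1) div n + 1, (y - 1) mod n + 1]) ys)))"

text \<open>One step of the recursive definition, given the values L e for lower orders e.\<close>
definition Lstep :: "nat \<Rightarrow> (nat \<Rightarrow> (nat list \<Rightarrow> 'a::field) \<Rightarrow> nat) \<Rightarrow> nat \<Rightarrow> (nat list \<Rightarrow> 'a) \<Rightarrow> nat" where
  "Lstep N L k B =
    (if k = 1 then (if \<exists>xs \<in> tdom N 1. B xs \<noteq> 0 then 1 else 0)
     else Inf {\<Sum>i<m. L (e i) (Bs i) + L (f i) (Cs i) | (m::nat) e f Bs Cs.
                 (\<forall>i<m. 0 < e i \<and> 0 < f i \<and> e i + f i = k) \<and>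
                 (\<forall>xs \<in> tdom N k. B xs = (\<Sum>i<m. tprod (e i) (Bs i) (Cs i) xs))})"

text \<open>Lupto N m j B is the formula size of B as an order-j tensor, valid for j < m.\<close>
primrec Lupto :: "nat \<Rightarrow> nat \<Rightarrow> nat \<Rightarrow> (nat list \<Rightarrow> 'a::field) \<Rightarrow> nat" where
  "Lupto N 0 = (\<lambda>j B. 0)"
| "Lupto N (Suc m) = (\<lambda>j B. if j < m then Lupto N m j B else Lstep N (Lupto N m) j B)"

definition Lncsm :: "nat \<Rightarrow> nat \<Rightarrow> (nat list \<Rightarrow> 'a::field) \<Rightarrow> nat" where
  "Lncsm N k B = Lupto N (Suc k) k B"

end

theory Submission
  imports Defs
begin

text \<open>
  Write \<open>A = unflatten n B\<close> for a tensor \<open>B\<close> on \<open>[n\<^sup>2]\<^sup>k\<close>. By induction on \<open>k\<close>, for all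
  \<open>a, b\<close> the tensor \<open>A\<close> splits as \<open>\<Sum>\<^sub>\<alpha> X\<^sub>\<alpha>\<close> with
  \<open>\<Sum>\<^sub>\<alpha> rank Mat\<^bsub>I(a,\<alpha>,b),J(a,\<alpha>,b)\<^esub>(X\<^sub>\<alpha>) \<le> L(B) n\<^sup>k / n\<^bsup>log k\<^esup>\<close>.
  Ranks are carried by explicit separable decompositions, which multiply under tensor products:
  for \<open>\<alpha> = \<beta> c \<gamma>\<close> the partition \<open>(a,\<alpha>,b)\<close> of \<open>[2(e+f)]\<close> is the partition \<open>(a,\<beta>,c)\<close> of
  the first \<open>2e\<close> coordinates followed by the partition \<open>(c,\<gamma>,b)\<close> of the last \<open>2f\<close>.
  In an optimal formula \<open>B = \<Sum> B\<^sub>i \<otimes> C\<^sub>i\<close> with orders \<open>e \<ge> f\<close>, the larger factor is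
  handled by induction with \<open>c = 1 - b\<close>; the smaller one then sits in the unbalanced case
  \<open>(c, b) = (1 - b, b)\<close>, where one side of every partition has at most \<open>f - 1\<close> coordinates,
  so it costs at most \<open>n\<^bsup>f-1\<^esup>\<close>. As \<open>e + f \<le> 2e\<close> gives
  \<open>n\<^bsup>log(e+f)\<^esup> \<le> n \<cdot> n\<^bsup>log e\<^esup>\<close>, the product costs at most
  \<open>L(B\<^sub>i) n\<^bsup>e+f\<^esup> / n\<^bsup>log(e+f)\<^esup>\<close>. Dividing by \<open>n\<^sup>d\<close> yields
  \<open>\<rho>(A) \<le> L(flatten n A) / n\<^bsup>log d\<^esup>\<close>.
\<close>

section \<open>Separable decompositions\<close>

definition depends_only_on :: "nat \<Rightarrow> nat \<Rightarrow> nat set \<Rightarrow> (nat list \<Rightarrow> 'a) \<Rightarrow> bool" where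
  "depends_only_on n K I U \<longleftrightarrow>
     (\<forall>xs\<in>tdom n K. \<forall>ys\<in>tdom n K. (\<forall>p\<in>I. xs ! (p - 1) = ys ! (p - 1)) \<longrightarrow> U xs = U ys)"

text \<open>A matrix-free form of \<open>rank Mat\<^bsub>I,J\<^esub>(X) \<le> r\<close> (see \<open>mrank_Mat_flat_le\<close>) which,
  unlike matrix rank, is directly compatible with tensor products (\<open>sep_rank_le_tprod\<close>).\<close>

definition sep_rank_le :: "nat \<Rightarrow> nat \<Rightarrow> nat set \<Rightarrow> nat set \<Rightarrow> (nat list \<Rightarrow> 'a::field) \<Rightarrow> nat \<Rightarrow> bool" where
  "sep_rank_le n K I J X r \<longleftrightarrow> (\<exists>(T::nat set) U V. finite T \<and> card T \<le> r \<and>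
      (\<forall>t\<in>T. depends_only_on n K I (U t) \<and> depends_only_on n K J (V t)) \<and>
      (\<forall>xs\<in>tdom n K. X xs = (\<Sum>t\<in>T. U t xs * V t xs)))"

lemma depends_only_onD:
  "depends_only_on n K I U \<Longrightarrow> xs \<in> tdom n K \<Longrightarrow> ys \<in> tdom n K \<Longrightarrow>
    (\<And>p. p \<in> I \<Longrightarrow> xs ! (p - 1) = ys ! (p - 1)) \<Longrightarrow> U xs = U ys"
  unfolding depends_only_on_def by blast

lemma sep_rank_leI:
  fixes T :: "'b set" and U V :: "'b \<Rightarrow> nat list \<Rightarrow> 'a::field"
  assumes "finite T" "card T \<le> r"
    and "\<And>t. t \<in> T \<Longrightarrow> depends_only_on n K I (U t)" "\<And>t. t \<in> T \<Longrightarrow> depends_only_on n K J (V t)"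
    and "\<And>xs. xs \<in> tdom n K \<Longrightarrow> X xs = (\<Sum>t\<in>T. U t xs * V t xs)"
  shows "sep_rank_le n K I J X r"
proof -
  obtain h where h: "bij_betw h {0..<card T} T"
    using ex_bij_betw_nat_finite[OF assms(1)] by blast
  have "X xs = (\<Sum>i\<in>{0..<card T}. U (h i) xs * V (h i) xs)" if "xs \<in> tdom n K" for xs
    using assms(5)[OF that] sum.reindex_bij_betw[OF h, of "\<lambda>t. U t xs * V t xs"] by simp
  moreover have "h i \<in> T" if "i \<in> {0..<card T}" for i
    using h that bij_betwE by blast
  ultimately show ?thesis
    unfolding sep_rank_le_def using assms(2-4)
    by (intro exI[of _ "{0..<card T}"] exI[of _ "U \<circ> h"] exI[of _ "V \<circ> h"]) auto
qed

lemma sep_rank_leE: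
  assumes "sep_rank_le n K I J X r"
  obtains T :: "nat set" and U V where "finite T" "card T \<le> r"
    "\<And>t. t \<in> T \<Longrightarrow> depends_only_on n K I (U t)" "\<And>t. t \<in> T \<Longrightarrow> depends_only_on n K J (V t)"
    "\<And>xs. xs \<in> tdom n K \<Longrightarrow> X xs = (\<Sum>t\<in>T. U t xs * V t xs)"
  using assms unfolding sep_rank_le_def by blast

lemma sep_rank_le_swap:
  assumes "sep_rank_le n K J I X r"
  shows "sep_rank_le n K I J X r"
proof -
  obtain T :: "nat set" and U V where "finite T" "card T \<le> r"
    "\<And>t. t \<in> T \<Longrightarrow> depends_only_on n K J (U t)" "\<And>t. t \<in> T \<Longrightarrow> depends_only_on n K I (V t)"
    "\<And>xs. xs \<in> tdom n K \<Longrightarrow> X xs = (\<Sum>t\<in>T. U t xs * V t xs)"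
    using assms by (rule sep_rank_leE) blast+
  then show ?thesis
    by (intro sep_rank_leI[where T=T and U=V and V=U]) (auto simp: mult.commute)
qed

lemma sep_rank_le_zero: "sep_rank_le n K I J (\<lambda>_. 0) 0"
  by (rule sep_rank_leI[where T="{}"]) auto

lemma sep_rank_le_add:
  assumes "sep_rank_le n K I J X r" "sep_rank_le n K I J Y s"
  shows "sep_rank_le n K I J (\<lambda>xs. X xs + Y xs) (r + s)"
proof -
  obtain T1 :: "nat set" and U1 V1 where 1: "finite T1" "card T1 \<le> r"
    "\<And>t. t \<in> T1 \<Longrightarrow> depends_only_on n K I (U1 t)" "\<And>t. t \<in> T1 \<Longrightarrow> depends_only_on n K J (V1 t)"
    "\<And>xs. xs \<in> tdom n K \<Longrightarrow> X xs = (\<Sum>t\<in>T1. U1 t xs * V1 t xs)"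
    using assms(1) by (rule sep_rank_leE) blast+
  obtain T2 :: "nat set" and U2 V2 where 2: "finite T2" "card T2 \<le> s"
    "\<And>t. t \<in> T2 \<Longrightarrow> depends_only_on n K I (U2 t)" "\<And>t. t \<in> T2 \<Longrightarrow> depends_only_on n K J (V2 t)"
    "\<And>xs. xs \<in> tdom n K \<Longrightarrow> Y xs = (\<Sum>t\<in>T2. U2 t xs * V2 t xs)"
    using assms(2) by (rule sep_rank_leE) blast+
  show ?thesis
    by (rule sep_rank_leI[where T="T1 <+> T2" and U="case_sum U1 U2" and V="case_sum V1 V2"])
      (use 1 2 in \<open>auto simp: card_Plus sum.Plus\<close>)
qed

lemma tdom_take: "xs \<in> tdom n K \<Longrightarrow> m \<le> K \<Longrightarrow> take m xs \<in> tdom n m"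
  unfolding tdom_def by (auto dest: in_set_takeD)

lemma tdom_drop: "xs \<in> tdom n (m + K) \<Longrightarrow> drop m xs \<in> tdom n K"
  unfolding tdom_def by (auto dest: in_set_dropD)

lemma depends_only_on_tprod:
  assumes "depends_only_on n K1 I1 U1" "depends_only_on n K2 I2 U2" "I1 \<subseteq> {1..K1}" "I2 \<subseteq> {1..K2}"
  shows "depends_only_on n (K1 + K2) (I1 \<union> (+) K1 ` I2) (tprod K1 U1 U2)"
  unfolding depends_only_on_def
proof (intro ballI impI)
  fix xs ys assume xs: "xs \<in> tdom n (K1 + K2)" and ys: "ys \<in> tdom n (K1 + K2)"
    and agree: "\<forall>p\<in>I1 \<union> (+) K1 ` I2. xs ! (p - 1) = ys ! (p - 1)"
  have "U1 (take K1 xs) = U1 (take K1 ys)"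
  proof (rule depends_only_onD[OF assms(1) tdom_take[OF xs] tdom_take[OF ys]])
    fix p assume "p \<in> I1"
    moreover have "p \<in> {1..K1}" using \<open>p \<in> I1\<close> assms(3) by blast
    ultimately have "xs ! (p - 1) = ys ! (p - 1)" "p - 1 < K1" using agree by auto
    then show "take K1 xs ! (p - 1) = take K1 ys ! (p - 1)" by simp
  qed simp_all
  moreover have "U2 (drop K1 xs) = U2 (drop K1 ys)"
  proof (rule depends_only_onD[OF assms(2) tdom_drop[OF xs] tdom_drop[OF ys]])
    fix p assume "p \<in> I2"
    moreover have "p \<in> {1..K2}" using \<open>p \<in> I2\<close> assms(4) by blast
    ultimately have "xs ! (K1 + p - 1) = ys ! (K1 + p - 1)" "1 \<le> p" using agree by auto
    moreover have "length xs = K1 + K2" "length ys = K1 + K2" using xs ys unfolding tdom_def by auto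
    ultimately show "drop K1 xs ! (p - 1) = drop K1 ys ! (p - 1)" by simp
  qed
  ultimately show "tprod K1 U1 U2 xs = tprod K1 U1 U2 ys" unfolding tprod_def by simp
qed

lemma sep_rank_le_tprod:
  assumes "sep_rank_le n K1 I1 J1 X r1" "sep_rank_le n K2 I2 J2 Y r2"
    and "I1 \<subseteq> {1..K1}" "J1 \<subseteq> {1..K1}" "I2 \<subseteq> {1..K2}" "J2 \<subseteq> {1..K2}"
  shows "sep_rank_le n (K1 + K2) (I1 \<union> (+) K1 ` I2) (J1 \<union> (+) K1 ` J2) (tprod K1 X Y) (r1 * r2)"
proof -
  obtain T1 :: "nat set" and U1 V1 where 1: "finite T1" "card T1 \<le> r1"
    "\<And>t. t \<in> T1 \<Longrightarrow> depends_only_on n K1 I1 (U1 t)" "\<And>t. t \<in> T1 \<Longrightarrow> depends_only_on n K1 J1 (V1 t)"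
    "\<And>xs. xs \<in> tdom n K1 \<Longrightarrow> X xs = (\<Sum>t\<in>T1. U1 t xs * V1 t xs)"
    using assms(1) by (rule sep_rank_leE) blast+
  obtain T2 :: "nat set" and U2 V2 where 2: "finite T2" "card T2 \<le> r2"
    "\<And>t. t \<in> T2 \<Longrightarrow> depends_only_on n K2 I2 (U2 t)" "\<And>t. t \<in> T2 \<Longrightarrow> depends_only_on n K2 J2 (V2 t)"
    "\<And>xs. xs \<in> tdom n K2 \<Longrightarrow> Y xs = (\<Sum>t\<in>T2. U2 t xs * V2 t xs)"
    using assms(2) by (rule sep_rank_leE) blast+
  show ?thesis
  proof (rule sep_rank_leI[where T="T1 \<times> T2" and U="\<lambda>(s, t). tprod K1 (U1 s) (U2 t)"
        and V="\<lambda>(s, t). tprod K1 (V1 s) (V2 t)"])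
    show "finite (T1 \<times> T2)" "card (T1 \<times> T2) \<le> r1 * r2"
      using 1 2 by (simp_all add: card_cartesian_product mult_le_mono)
  next
    fix st assume "st \<in> T1 \<times> T2"
    then obtain s t where st: "st = (s, t)" "s \<in> T1" "t \<in> T2" by blast
    show "depends_only_on n (K1 + K2) (I1 \<union> (+) K1 ` I2) ((\<lambda>(s, t). tprod K1 (U1 s) (U2 t)) st)"
      using depends_only_on_tprod[OF 1(3)[OF st(2)] 2(3)[OF st(3)] assms(3,5)] st(1) by simp
    show "depends_only_on n (K1 + K2) (J1 \<union> (+) K1 ` J2) ((\<lambda>(s, t). tprod K1 (V1 s) (V2 t)) st)"
      using depends_only_on_tprod[OF 1(4)[OF st(2)] 2(4)[OF st(3)] assms(4,6)] st(1) by simp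
  next
    fix xs assume xs: "xs \<in> tdom n (K1 + K2)"
    have "tprod K1 X Y xs = (\<Sum>s\<in>T1. U1 s (take K1 xs) * V1 s (take K1 xs)) *
        (\<Sum>t\<in>T2. U2 t (drop K1 xs) * V2 t (drop K1 xs))"
      unfolding tprod_def using 1(5)[OF tdom_take[OF xs]] 2(5)[OF tdom_drop[OF xs]] by simp
    also have "\<dots> = (\<Sum>(s, t)\<in>T1 \<times> T2. tprod K1 (U1 s) (U2 t) xs * tprod K1 (V1 s) (V2 t) xs)"
      unfolding sum_product sum.cartesian_product tprod_def by (simp add: ac_simps)
    finally show "tprod K1 X Y xs = (\<Sum>st\<in>T1 \<times> T2. (\<lambda>(s, t). tprod K1 (U1 s) (U2 t)) st xs *
        (\<lambda>(s, t). tprod K1 (V1 s) (V2 t)) st xs)"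
      by (simp add: case_prod_beta)
  qed
qed

lemma sum_PiE_indicator:
  fixes F :: "(nat \<Rightarrow> nat) \<Rightarrow> 'a::semiring_1"
  assumes "finite J" "J \<subseteq> {1..K}" "xs \<in> tdom n K"
  shows "(\<Sum>t\<in>PiE J (\<lambda>_. {1..n}). F t * (if \<forall>p\<in>J. xs ! (p - 1) = t p then 1 else 0))
    = F (restrict (\<lambda>p. xs ! (p - 1)) J)"
proof -
  let ?t0 = "restrict (\<lambda>p. xs ! (p - 1)) J"
  have "?t0 \<in> PiE J (\<lambda>_. {1..n})"
    using assms(2,3) unfolding tdom_def by (force intro: nth_mem)
  moreover have "(\<forall>p\<in>J. xs ! (p - 1) = t p) \<longleftrightarrow> t = ?t0" if "t \<in> PiE J (\<lambda>_. {1..n})" for t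
    using that by (auto simp: PiE_iff extensional_def fun_eq_iff)
  then have "(\<Sum>t\<in>PiE J (\<lambda>_. {1..n}). F t * (if \<forall>p\<in>J. xs ! (p - 1) = t p then 1 else 0))
      = (\<Sum>t\<in>PiE J (\<lambda>_. {1..n}). if t = ?t0 then F t else 0)"
    by (intro sum.cong) auto
  ultimately show ?thesis
    using assms(1) by (simp add: finite_PiE)
qed

lemma sep_rank_le_pow_card:
  fixes X :: "nat list \<Rightarrow> 'a::field"
  assumes "{1..K} \<subseteq> I \<union> J" "J \<subseteq> {1..K}"
  shows "sep_rank_le n K I J X (n ^ card J)"
proof -
  have "finite J" using assms(2) finite_subset by blast
  \<comment> \<open>one term for each assignment \<open>t\<close> of the \<open>J\<close>-coordinates: \<open>U t\<close> fixes them to \<open>t\<close>,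
    and \<open>V t\<close> is the indicator of \<open>t\<close>\<close>
  define U where "U = (\<lambda>t xs. X (map (\<lambda>i. if Suc i \<in> J then t (Suc i) else xs ! i) [0..<K]))"
  define V :: "(nat \<Rightarrow> nat) \<Rightarrow> nat list \<Rightarrow> 'a" where "V = (\<lambda>t xs. if \<forall>p\<in>J. xs ! (p - 1) = t p then 1 else 0)"
  show ?thesis
  proof (rule sep_rank_leI[where T="PiE J (\<lambda>_. {1..n})" and U=U and V=V])
    show "finite (PiE J (\<lambda>_. {1..n}))" "card (PiE J (\<lambda>_. {1..n})) \<le> n ^ card J"
      using \<open>finite J\<close> by (simp_all add: finite_PiE card_PiE)
    show "depends_only_on n K I (U t)" for t
      unfolding depends_only_on_def U_def
    proof (intro ballI impI arg_cong[where f=X] map_cong[OF refl])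
      fix xs ys :: "nat list" and i assume agree: "\<forall>p\<in>I. xs ! (p - 1) = ys ! (p - 1)" and "i \<in> set [0..<K]"
      then have "Suc i \<in> {1..K}" by simp
      then have "Suc i \<in> I \<union> J" using assms(1) by blast
      then show "(if Suc i \<in> J then t (Suc i) else xs ! i) = (if Suc i \<in> J then t (Suc i) else ys ! i)"
        using agree by fastforce
    qed
    show "depends_only_on n K J (V t)" for t
      unfolding depends_only_on_def V_def by simp
  next
    fix xs assume xs: "xs \<in> tdom n K"
    have "map (\<lambda>i. if Suc i \<in> J then restrict (\<lambda>p. xs ! (p - 1)) J (Suc i) else xs ! i) [0..<K]
        = map ((!) xs) [0..<length xs]"
      using xs unfolding tdom_def by simp
    then have "U (restrict (\<lambda>p. xs ! (p - 1)) J) xs = X xs"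
      unfolding U_def by (simp add: map_nth)
    then show "X xs = (\<Sum>t\<in>PiE J (\<lambda>_. {1..n}). U t xs * V t xs)"
      unfolding V_def using sum_PiE_indicator[OF \<open>finite J\<close> assms(2) xs, of "\<lambda>t. U t xs"] by simp
  qed
qed

lemma sep_rank_le_pow_min_card:
  fixes X :: "nat list \<Rightarrow> 'a::field"
  assumes "{1..K} \<subseteq> I \<union> J" "I \<subseteq> {1..K}" "J \<subseteq> {1..K}"
  shows "sep_rank_le n K I J X (n ^ min (card I) (card J))"
proof (cases "card J \<le> card I")
  case True
  then show ?thesis using sep_rank_le_pow_card[OF assms(1,3)] by (simp add: min_def)
next
  case False
  have "sep_rank_le n K J I X (n ^ card I)"
    using assms(1) by (intro sep_rank_le_pow_card[OF _ assms(2)]) blast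
  then show ?thesis using False by (simp add: min_def sep_rank_le_swap)
qed

lemma mrank_mat_sum_products_le:
  fixes u v :: "'b \<Rightarrow> nat \<Rightarrow> 'a::field"
  assumes "finite T"
  shows "mrank (mat R C (\<lambda>(r, c). \<Sum>t\<in>T. u t r * v t c)) \<le> card T"
  using assms
proof (induction T rule: finite_induct)
  case empty
  have "mat R C (\<lambda>(r, c). \<Sum>t\<in>{}. u t r * v t c) = (0\<^sub>m R C :: 'a mat)"
    by (rule eq_matI) auto
  then show ?case unfolding mrank_def by (simp add: vec_space.rank_0I)
next
  case (insert t T)
  let ?M = "\<lambda>T. mat R C (\<lambda>(r, c). \<Sum>t\<in>T. u t r * v t c)"
  let ?P = "mat R C (\<lambda>(r, c). u t r * v t c)"
  have split: "?M (insert t T) = ?P + ?M T"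
    by (rule eq_matI) (simp_all add: insert)
  have "mrank (?M (insert t T)) \<le> mrank ?P + mrank (?M T)"
    unfolding split mrank_def
    using vec_space.rank_subadditive[OF mat_carrier mat_carrier] by simp
  moreover have "mrank ?P \<le> 1"
    unfolding mrank_def dim_row_mat by (rule vec_space.rank_le_1_product_entries[of _ R C]) auto
  moreover have "card (insert t T) = Suc (card T)"
    using insert.hyps by simp
  ultimately show ?case using insert.IH by linarith
qed

lemma flat_index_nth:
  "i < K \<Longrightarrow> flat_index n K I J r c ! i =
     (if Suc i \<in> I then digit n r (card {q \<in> I. q < Suc i}) else digit n c (card {q \<in> J. q < Suc i}))"
proof -
  have "[1..<K+1] = map Suc [0..<K]" by (simp add: map_Suc_upt)
  then show "i < K \<Longrightarrow> ?thesis" unfolding flat_index_def by simp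
qed

lemma flat_index_tdom: "n \<ge> 1 \<Longrightarrow> flat_index n K I J r c \<in> tdom n K"
  unfolding tdom_def flat_index_def digit_def by (auto simp: Suc_leI)

lemma depends_only_on_flat_index_row:
  assumes "depends_only_on n K I U" "n \<ge> 1" "I \<subseteq> {1..K}"
  shows "U (flat_index n K I J r c) = U (flat_index n K I J r c')"
proof (rule depends_only_onD[OF assms(1) flat_index_tdom[OF assms(2)] flat_index_tdom[OF assms(2)]])
  fix p assume "p \<in> I"
  moreover obtain q where "p = Suc q" "q < K" using \<open>p \<in> I\<close> assms(3) by (cases p) auto
  ultimately show "flat_index n K I J r c ! (p - 1) = flat_index n K I J r c' ! (p - 1)"
    by (simp add: flat_index_nth)
qed


lemma depends_only_on_flat_index_col:
  assumes "depends_only_on n K J V" "n \<ge> 1" "J \<subseteq> {1..K}" "I \<inter> J = {}"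
  shows "V (flat_index n K I J r c) = V (flat_index n K I J r' c)"
proof (rule depends_only_onD[OF assms(1) flat_index_tdom[OF assms(2)] flat_index_tdom[OF assms(2)]])
  fix p assume "p \<in> J"
  moreover obtain q where "p = Suc q" "q < K" using \<open>p \<in> J\<close> assms(3) by (cases p) auto
  moreover have "p \<notin> I" using \<open>p \<in> J\<close> assms(4) by blast
  ultimately show "flat_index n K I J r c ! (p - 1) = flat_index n K I J r' c ! (p - 1)"
    by (simp add: flat_index_nth)
qed


lemma mrank_Mat_flat_le:
  assumes "n \<ge> 1" "sep_rank_le n K I J X r" "I \<subseteq> {1..K}" "J \<subseteq> {1..K}" "I \<inter> J = {}"
  shows "mrank (Mat_flat n K I J X) \<le> r"
proof -
  obtain T :: "nat set" and U V where T: "finite T" "card T \<le> r"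
    "\<And>t. t \<in> T \<Longrightarrow> depends_only_on n K I (U t)" "\<And>t. t \<in> T \<Longrightarrow> depends_only_on n K J (V t)"
    "\<And>xs. xs \<in> tdom n K \<Longrightarrow> X xs = (\<Sum>t\<in>T. U t xs * V t xs)"
    using assms(2) by (rule sep_rank_leE) blast+
  let ?fi = "flat_index n K I J"
  have "X (?fi i j) = (\<Sum>t\<in>T. U t (?fi i 0) * V t (?fi 0 j))" for i j
  proof -
    have "X (?fi i j) = (\<Sum>t\<in>T. U t (?fi i j) * V t (?fi i j))"
      using T(5) flat_index_tdom[OF assms(1)] by blast
    also have "\<dots> = (\<Sum>t\<in>T. U t (?fi i 0) * V t (?fi 0 j))"
    proof (rule sum.cong[OF refl])
      fix t assume "t \<in> T"
      show "U t (?fi i j) * V t (?fi i j) = U t (?fi i 0) * V t (?fi 0 j)"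
        using depends_only_on_flat_index_row[OF T(3)[OF \<open>t \<in> T\<close>] assms(1,3), of J i j 0]
          depends_only_on_flat_index_col[OF T(4)[OF \<open>t \<in> T\<close>] assms(1,4,5), of i j 0] by simp
    qed
    finally show ?thesis .
  qed
  then have "Mat_flat n K I J X = mat (n ^ card I) (n ^ card J) (\<lambda>(i, j). \<Sum>t\<in>T. U t (?fi i 0) * V t (?fi 0 j))"
    unfolding Mat_flat_def by auto
  then have "mrank (Mat_flat n K I J X) \<le> card T"
    using mrank_mat_sum_products_le[OF T(1)] by simp
  with T(2) show ?thesis by linarith
qed

section \<open>The partitions I and J\<close>

lemma alphas_nth_le_1:
  assumes "\<alpha> \<in> alphas k" "i < k - 1"
  shows "\<alpha> ! i \<le> 1"
proof -
  have "\<alpha> ! i \<in> set \<alpha>" using assms unfolding alphas_def by simp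
  then show ?thesis using assms(1) unfolding alphas_def by auto
qed

lemma finite_alphas: "finite (alphas k)"
proof -
  have "alphas k = {xs. set xs \<subseteq> {0, 1} \<and> length xs = k - 1}" unfolding alphas_def by auto
  then show ?thesis using finite_lists_length_eq[of "{0::nat, 1}" "k - 1"] by simp
qed

text \<open>Coordinates \<open>2i\<close> and \<open>2i+1\<close> form the \<open>i\<close>-th pair, and \<open>I(a,\<alpha>,b)\<close> takes the
  one of parity \<open>\<alpha>\<^sub>i\<close>.\<close>

definition in_Ipart :: "nat \<Rightarrow> nat \<Rightarrow> nat list \<Rightarrow> nat \<Rightarrow> nat \<Rightarrow> bool" where
  "in_Ipart k a \<alpha> b p \<longleftrightarrow>
     (if p = 1 then a = 1 else if p = 2 * k then b = 0 else \<alpha> ! (p div 2 - 1) = p mod 2)"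

lemma middle_coordinates_iff:
  assumes "\<alpha> \<in> alphas k"
  shows "(\<exists>i. p = 2 * i + \<alpha> ! (i - 1) \<and> 1 \<le> i \<and> i \<le> k - 1) \<longleftrightarrow>
    2 \<le> p \<and> p < 2 * k \<and> \<alpha> ! (p div 2 - 1) = p mod 2"
proof
  assume "\<exists>i. p = 2 * i + \<alpha> ! (i - 1) \<and> 1 \<le> i \<and> i \<le> k - 1"
  then obtain i where i: "p = 2 * i + \<alpha> ! (i - 1)" "1 \<le> i" "i \<le> k - 1" by blast
  have bit: "\<alpha> ! (i - 1) \<le> 1" using alphas_nth_le_1[OF assms] i(2,3) by simp
  with i(1) have "p div 2 = i" "p mod 2 = \<alpha> ! (i - 1)" by presburger+
  then show "2 \<le> p \<and> p < 2 * k \<and> \<alpha> ! (p div 2 - 1) = p mod 2" using i bit by auto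
next
  assume p: "2 \<le> p \<and> p < 2 * k \<and> \<alpha> ! (p div 2 - 1) = p mod 2"
  have "p = 2 * (p div 2) + p mod 2" by simp
  then have "p = 2 * (p div 2) + \<alpha> ! (p div 2 - 1) \<and> 1 \<le> p div 2 \<and> p div 2 \<le> k - 1"
    using p by linarith
  then show "\<exists>i. p = 2 * i + \<alpha> ! (i - 1) \<and> 1 \<le> i \<and> i \<le> k - 1" by blast
qed

lemma Ipart_eq:
  assumes "\<alpha> \<in> alphas k" "a \<le> 1" "b \<le> 1"
  shows "Ipart k a \<alpha> b = {p \<in> {1..2 * k}. in_Ipart k a \<alpha> b p}"
proof -
  have "p \<in> Ipart k a \<alpha> b \<longleftrightarrow> p \<in> {1..2 * k} \<and> in_Ipart k a \<alpha> b p" for p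
  proof -
    have "p \<in> Ipart k a \<alpha> b \<longleftrightarrow> p \<in> {1..2 * k} \<and>
        (p = a \<or> (2 \<le> p \<and> p < 2 * k \<and> \<alpha> ! (p div 2 - 1) = p mod 2) \<or> p = 2 * k + b)"
      unfolding Ipart_def middle_coordinates_iff[OF assms(1), symmetric] by blast
    also have "\<dots> \<longleftrightarrow> p \<in> {1..2 * k} \<and> in_Ipart k a \<alpha> b p"
      using assms(2,3) unfolding in_Ipart_def by (cases "p = 1"; cases "p = 2 * k") auto
    finally show ?thesis .
  qed
  then show ?thesis by blast
qed

lemma complement_alphas: "\<alpha> \<in> alphas k \<Longrightarrow> map ((-) 1) \<alpha> \<in> alphas k"
  unfolding alphas_def by auto

lemma Jpart_eq_Ipart_complement:
  assumes "\<alpha> \<in> alphas k" "b \<le> 1"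
  shows "Jpart k a \<alpha> b = Ipart k (1 - a) (map ((-) 1) \<alpha>) (1 - b)"
proof -
  have entry: "2 * i + 1 - \<alpha> ! (i - 1) = 2 * i + map ((-) 1) \<alpha> ! (i - 1)" if "1 \<le> i" "i \<le> k - 1" for i
  proof -
    have "i - 1 < length \<alpha>" using assms(1) that unfolding alphas_def by simp
    moreover have "\<alpha> ! (i - 1) \<le> 1" using alphas_nth_le_1[OF assms(1)] that by simp
    ultimately show ?thesis by simp
  qed
  have "{2 * i + 1 - \<alpha> ! (i - 1) | i. 1 \<le> i \<and> i \<le> k - 1} =
      {2 * i + map ((-) 1) \<alpha> ! (i - 1) | i. 1 \<le> i \<and> i \<le> k - 1}"
    unfolding setcompr_eq_image by (rule image_cong[OF refl]) (rule entry; simp)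
  moreover have "2 * k + 1 - b = 2 * k + (1 - b)" using assms(2) by simp
  ultimately show ?thesis
    unfolding Jpart_def Ipart_def by simp
qed

lemma in_Ipart_complement:
  assumes "\<alpha> \<in> alphas k" "a \<le> 1" "b \<le> 1" "p \<in> {1..2 * k}"
  shows "in_Ipart k (1 - a) (map ((-) 1) \<alpha>) (1 - b) p \<longleftrightarrow> \<not> in_Ipart k a \<alpha> b p"
proof -
  consider "p = 1" | "p = 2 * k" "p \<noteq> 1" | "p \<noteq> 1" "p \<noteq> 2 * k" by blast
  then show ?thesis
  proof cases
    case 3
    then have j: "p div 2 - 1 < k - 1" using assms(4) by auto
    then have "map ((-) 1) \<alpha> ! (p div 2 - 1) = 1 - \<alpha> ! (p div 2 - 1)"
      using assms(1) unfolding alphas_def by simp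
    moreover have "\<alpha> ! (p div 2 - 1) \<le> 1" using alphas_nth_le_1[OF assms(1) j] .
    moreover have "1 - x = m \<longleftrightarrow> x \<noteq> m" if "x \<le> 1" "m \<le> (1::nat)" for x m
      using that by presburger
    ultimately show ?thesis using 3 unfolding in_Ipart_def by simp
  qed (use assms(2,3) in \<open>auto simp: in_Ipart_def\<close>)
qed

lemma Jpart_eq:
  assumes "\<alpha> \<in> alphas k" "a \<le> 1" "b \<le> 1"
  shows "Jpart k a \<alpha> b = {p \<in> {1..2 * k}. \<not> in_Ipart k a \<alpha> b p}"
proof -
  have "Jpart k a \<alpha> b = Ipart k (1 - a) (map ((-) 1) \<alpha>) (1 - b)"
    by (rule Jpart_eq_Ipart_complement[OF assms(1,3)])
  also have "\<dots> = {p \<in> {1..2 * k}. in_Ipart k (1 - a) (map ((-) 1) \<alpha>) (1 - b) p}"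
    by (rule Ipart_eq[OF complement_alphas[OF assms(1)]]) simp_all
  also have "\<dots> = {p \<in> {1..2 * k}. \<not> in_Ipart k a \<alpha> b p}"
    using in_Ipart_complement[OF assms] by blast
  finally show ?thesis .
qed

lemma Ipart_subset: "Ipart k a \<alpha> b \<subseteq> {1..2 * k}"
  unfolding Ipart_def by blast

lemma Jpart_subset: "Jpart k a \<alpha> b \<subseteq> {1..2 * k}"
  unfolding Jpart_def by blast

lemma Ipart_Jpart_disjoint:
  "\<alpha> \<in> alphas k \<Longrightarrow> a \<le> 1 \<Longrightarrow> b \<le> 1 \<Longrightarrow> Ipart k a \<alpha> b \<inter> Jpart k a \<alpha> b = {}"
  by (auto simp: Ipart_eq Jpart_eq)

lemma Ipart_Jpart_cover:
  "\<alpha> \<in> alphas k \<Longrightarrow> a \<le> 1 \<Longrightarrow> b \<le> 1 \<Longrightarrow> Ipart k a \<alpha> b \<union> Jpart k a \<alpha> b = {1..2 * k}"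
  by (auto simp: Ipart_eq Jpart_eq)

lemma card_Ipart_0_1: "card (Ipart k 0 \<alpha> 1) \<le> k - 1"
proof -
  have "Ipart k 0 \<alpha> 1 \<subseteq> (\<lambda>i. 2 * i + \<alpha> ! (i - 1)) ` {1..k - 1}"
    unfolding Ipart_def by auto
  then have "card (Ipart k 0 \<alpha> 1) \<le> card ((\<lambda>i. 2 * i + \<alpha> ! (i - 1)) ` {1..k - 1})"
    by (intro card_mono) auto
  also have "\<dots> \<le> k - 1"
    using card_image_le[of "{1..k - 1}"] by simp
  finally show ?thesis .
qed

lemma min_card_parts_unbalanced:
  assumes "\<alpha> \<in> alphas k" "(a = 1 \<and> b = 0) \<or> (a = 0 \<and> b = 1)"
  shows "min (card (Ipart k a \<alpha> b)) (card (Jpart k a \<alpha> b)) \<le> k - 1"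
  using assms(2)
proof
  assume "a = 1 \<and> b = 0"
  then have "card (Jpart k a \<alpha> b) \<le> k - 1"
    using card_Ipart_0_1 by (simp add: Jpart_eq_Ipart_complement[OF assms(1)])
  then show ?thesis by simp
qed (use card_Ipart_0_1 in \<open>simp add: min.coboundedI1\<close>)

lemma min_card_parts_order_one:
  assumes "\<alpha> \<in> alphas 1" "a \<le> 1" "b \<le> 1"
  shows "min (card (Ipart 1 a \<alpha> b)) (card (Jpart 1 a \<alpha> b)) \<le> 1"
proof -
  have "card (Ipart 1 a \<alpha> b) + card (Jpart 1 a \<alpha> b) = card {1..2 * 1::nat}"
    using Ipart_Jpart_cover[OF assms] Ipart_Jpart_disjoint[OF assms]
    by (metis Ipart_subset card_Un_disjoint finite_atLeastAtMost finite_subset Jpart_subset)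
  then show ?thesis by simp
qed

lemma in_Ipart_append_left:
  assumes "length \<beta> = e - 1" "1 \<le> e" "1 \<le> f" "p \<in> {1..2 * e}"
  shows "in_Ipart (e + f) a (\<beta> @ c # \<gamma>) b p \<longleftrightarrow> in_Ipart e a \<beta> c p"
proof -
  consider "p = 1" | "p = 2 * e" "p \<noteq> 1" | "p \<noteq> 1" "p < 2 * e" using assms(4) by fastforce
  then show ?thesis
  proof cases
    case 2
    moreover have "(\<beta> @ c # \<gamma>) ! (p div 2 - 1) = c" using 2 assms(1) by (simp add: nth_append)
    ultimately show ?thesis using assms(3) unfolding in_Ipart_def by auto
  next
    case 3
    then have "2 \<le> p" using assms(4) by simp
    with 3 have "p div 2 - 1 < length \<beta>" using assms(1) by presburger
    then have "(\<beta> @ c # \<gamma>) ! (p div 2 - 1) = \<beta> ! (p div 2 - 1)"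
      by (simp add: nth_append)
    then show ?thesis using 3 unfolding in_Ipart_def by auto
  qed (simp add: in_Ipart_def)
qed

lemma in_Ipart_append_right:
  assumes "length \<beta> = e - 1" "1 \<le> e" "p \<in> {1..2 * f}"
  shows "in_Ipart (e + f) a (\<beta> @ c # \<gamma>) b (2 * e + p) \<longleftrightarrow> in_Ipart f c \<gamma> b p"
proof -
  consider "p = 1" | "p = 2 * f" "p \<noteq> 1" | "p \<noteq> 1" "p < 2 * f" using assms(3) by fastforce
  then show ?thesis
  proof cases
    case 1
    have "(2 * e + 1) div 2 - 1 = length \<beta>" "(2 * e + 1) mod 2 = 1"
      "2 * e + 1 \<noteq> 1" "2 * e + 1 \<noteq> 2 * (e + f)"
      using assms(1,2) by presburger+
    then show ?thesis using 1 unfolding in_Ipart_def by simp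
  next
    case 3
    then have "1 \<le> p div 2" using assms(3) by simp
    moreover have "(2 * e + p) div 2 = e + p div 2" by simp
    ultimately have "(2 * e + p) div 2 - 1 = length \<beta> + Suc (p div 2 - 1)" using assms(1,2) by linarith
    then have "(\<beta> @ c # \<gamma>) ! ((2 * e + p) div 2 - 1) = \<gamma> ! (p div 2 - 1)"
      by (simp add: nth_append)
    moreover have "2 * e + p \<noteq> 1" "2 * e + p \<noteq> 2 * (e + f)" "(2 * e + p) mod 2 = p mod 2"
      using 3 assms(2) by simp_all
    ultimately show ?thesis using 3 unfolding in_Ipart_def by simp
  qed (use assms(2) in \<open>simp add: in_Ipart_def\<close>)
qed

lemma Ipart_append:
  assumes "\<beta> \<in> alphas e" "\<gamma> \<in> alphas f" "1 \<le> e" "1 \<le> f" "a \<le> 1" "b \<le> 1" "c \<le> 1"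
  shows "Ipart (e + f) a (\<beta> @ c # \<gamma>) b = Ipart e a \<beta> c \<union> (+) (2 * e) ` Ipart f c \<gamma> b"
proof -
  have \<alpha>: "\<beta> @ c # \<gamma> \<in> alphas (e + f)" and len: "length \<beta> = e - 1"
    using assms(1-4,7) unfolding alphas_def by auto
  have shift: "p \<in> (+) (2 * e) ` Ipart f c \<gamma> b \<longleftrightarrow> 2 * e < p \<and> p - 2 * e \<in> Ipart f c \<gamma> b" for p
    using Ipart_subset[of f c \<gamma> b] by (force intro: image_eqI[where x="p - 2 * e"])
  have "p \<in> Ipart (e + f) a (\<beta> @ c # \<gamma>) b \<longleftrightarrow> p \<in> Ipart e a \<beta> c \<union> (+) (2 * e) ` Ipart f c \<gamma> b" for p
  proof (cases "p \<le> 2 * e")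
    case True
    have "p \<in> Ipart (e + f) a (\<beta> @ c # \<gamma>) b \<longleftrightarrow> p \<in> {1..2 * e} \<and> in_Ipart (e + f) a (\<beta> @ c # \<gamma>) b p"
      using True by (auto simp: Ipart_eq[OF \<alpha> assms(5,6)])
    also have "\<dots> \<longleftrightarrow> p \<in> {1..2 * e} \<and> in_Ipart e a \<beta> c p"
      using in_Ipart_append_left[OF len assms(3,4)] by blast
    also have "\<dots> \<longleftrightarrow> p \<in> Ipart e a \<beta> c"
      by (simp add: Ipart_eq[OF assms(1,5,7)])
    finally show ?thesis using True by (simp add: shift)
  next
    case False
    define q where "q = p - 2 * e"
    have p: "p = 2 * e + q" "1 \<le> q" using False unfolding q_def by auto
    have "p \<in> Ipart (e + f) a (\<beta> @ c # \<gamma>) b \<longleftrightarrow> q \<in> {1..2 * f} \<and> in_Ipart (e + f) a (\<beta> @ c # \<gamma>) b (2 * e + q)"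
      using p by (auto simp: Ipart_eq[OF \<alpha> assms(5,6)])
    also have "\<dots> \<longleftrightarrow> q \<in> {1..2 * f} \<and> in_Ipart f c \<gamma> b q"
      using in_Ipart_append_right[OF len assms(3)] by blast
    also have "\<dots> \<longleftrightarrow> q \<in> Ipart f c \<gamma> b"
      by (simp add: Ipart_eq[OF assms(2,7,6)])
    finally show ?thesis using p Ipart_subset[of e a \<beta> c] by (auto simp: shift)
  qed
  then show ?thesis by blast
qed

lemma Jpart_append:
  assumes "\<beta> \<in> alphas e" "\<gamma> \<in> alphas f" "1 \<le> e" "1 \<le> f" "a \<le> 1" "b \<le> 1" "c \<le> 1"
  shows "Jpart (e + f) a (\<beta> @ c # \<gamma>) b = Jpart e a \<beta> c \<union> (+) (2 * e) ` Jpart f c \<gamma> b"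
proof -
  have "\<beta> @ c # \<gamma> \<in> alphas (e + f)"
    using assms(1-4,7) unfolding alphas_def by auto
  then have "Jpart (e + f) a (\<beta> @ c # \<gamma>) b =
      Ipart (e + f) (1 - a) (map ((-) 1) \<beta> @ (1 - c) # map ((-) 1) \<gamma>) (1 - b)"
    using Jpart_eq_Ipart_complement assms(6) by simp
  also have "\<dots> = Ipart e (1 - a) (map ((-) 1) \<beta>) (1 - c) \<union> (+) (2 * e) ` Ipart f (1 - c) (map ((-) 1) \<gamma>) (1 - b)"
    using assms by (intro Ipart_append complement_alphas) simp_all
  also have "\<dots> = Jpart e a \<beta> c \<union> (+) (2 * e) ` Jpart f c \<gamma> b"
    using assms by (simp add: Jpart_eq_Ipart_complement)
  finally show ?thesis .
qed

lemma alphas_split_at: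
  assumes "\<alpha> \<in> alphas (e + f)" "1 \<le> e" "1 \<le> f"
  shows "\<alpha> = take (e - 1) \<alpha> @ \<alpha> ! (e - 1) # drop e \<alpha>" "take (e - 1) \<alpha> \<in> alphas e" "drop e \<alpha> \<in> alphas f"
proof -
  have "e - 1 < length \<alpha>" using assms unfolding alphas_def by simp
  then show "\<alpha> = take (e - 1) \<alpha> @ \<alpha> ! (e - 1) # drop e \<alpha>"
    using id_take_nth_drop assms(2) by fastforce
  show "take (e - 1) \<alpha> \<in> alphas e" "drop e \<alpha> \<in> alphas f"
    using assms unfolding alphas_def by (auto dest: in_set_takeD in_set_dropD)
qed

lemma sum_alphas_append:
  fixes g :: "nat list \<Rightarrow> nat list \<Rightarrow> 'b::comm_monoid_add"
  assumes "1 \<le> e" "1 \<le> f" "c \<le> 1"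
  shows "(\<Sum>\<alpha>\<in>alphas (e + f). if \<alpha> ! (e - 1) = c then g (take (e - 1) \<alpha>) (drop e \<alpha>) else 0)
       = (\<Sum>\<beta>\<in>alphas e. \<Sum>\<gamma>\<in>alphas f. g \<beta> \<gamma>)"
proof -
  let ?app = "\<lambda>(\<beta>, \<gamma>). \<beta> @ c # \<gamma>"
  have image: "{\<alpha> \<in> alphas (e + f). \<alpha> ! (e - 1) = c} = ?app ` (alphas e \<times> alphas f)"
  proof (intro equalityI subsetI)
    fix \<alpha> assume "\<alpha> \<in> {\<alpha> \<in> alphas (e + f). \<alpha> ! (e - 1) = c}"
    then show "\<alpha> \<in> ?app ` (alphas e \<times> alphas f)"
      using alphas_split_at[of \<alpha> e f] assms(1,2)
      by (intro image_eqI[of _ _ "(take (e - 1) \<alpha>, drop e \<alpha>)"]) auto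
  qed (use assms in \<open>auto simp: alphas_def nth_append\<close>)
  have inj: "inj_on ?app (alphas e \<times> alphas f)"
    unfolding inj_on_def alphas_def by auto
  have "(\<Sum>\<alpha>\<in>alphas (e + f). if \<alpha> ! (e - 1) = c then g (take (e - 1) \<alpha>) (drop e \<alpha>) else 0)
      = (\<Sum>\<alpha>\<in>?app ` (alphas e \<times> alphas f). g (take (e - 1) \<alpha>) (drop e \<alpha>))"
    unfolding image[symmetric] by (rule sum.inter_filter[OF finite_alphas, symmetric])
  also have "\<dots> = (\<Sum>(\<beta>, \<gamma>)\<in>alphas e \<times> alphas f. g \<beta> \<gamma>)"
    using assms(1) by (subst sum.reindex[OF inj]) (auto simp: alphas_def intro!: sum.cong)
  finally show ?thesis by (simp add: sum.cartesian_product)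
qed

section \<open>Decompositions along the partitions\<close>

text \<open>\<open>rho_rank_le n k a b A s\<close>: \<open>s\<close> bounds \<open>n\<^sup>k\<close> times the inner minimum in the definition
  of \<open>rho\<close>, witnessed by separable decompositions of the summands.\<close>

definition rho_rank_le :: "nat \<Rightarrow> nat \<Rightarrow> nat \<Rightarrow> nat \<Rightarrow> (nat list \<Rightarrow> 'a::field) \<Rightarrow> real \<Rightarrow> bool" where
  "rho_rank_le n k a b A s \<longleftrightarrow> (\<exists>X r. (\<forall>xs\<in>tdom n (2 * k). A xs = (\<Sum>\<alpha>\<in>alphas k. X \<alpha> xs)) \<and>
      (\<forall>\<alpha>\<in>alphas k. sep_rank_le n (2 * k) (Ipart k a \<alpha> b) (Jpart k a \<alpha> b) (X \<alpha>) (r \<alpha>)) \<and>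
      real (\<Sum>\<alpha>\<in>alphas k. r \<alpha>) \<le> s)"

lemma rho_rank_leI:
  assumes "\<And>xs. xs \<in> tdom n (2 * k) \<Longrightarrow> A xs = (\<Sum>\<alpha>\<in>alphas k. X \<alpha> xs)"
    and "\<And>\<alpha>. \<alpha> \<in> alphas k \<Longrightarrow> sep_rank_le n (2 * k) (Ipart k a \<alpha> b) (Jpart k a \<alpha> b) (X \<alpha>) (r \<alpha>)"
    and "real (\<Sum>\<alpha>\<in>alphas k. r \<alpha>) \<le> s"
  shows "rho_rank_le n k a b A s"
  unfolding rho_rank_le_def using assms by blast

lemma rho_rank_leE:
  assumes "rho_rank_le n k a b A s"
  obtains X r where "\<And>xs. xs \<in> tdom n (2 * k) \<Longrightarrow> A xs = (\<Sum>\<alpha>\<in>alphas k. X \<alpha> xs)"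
    "\<And>\<alpha>. \<alpha> \<in> alphas k \<Longrightarrow> sep_rank_le n (2 * k) (Ipart k a \<alpha> b) (Jpart k a \<alpha> b) (X \<alpha>) (r \<alpha>)"
    "real (\<Sum>\<alpha>\<in>alphas k. r \<alpha>) \<le> s"
  using assms unfolding rho_rank_le_def by blast

lemma rho_rank_le_mono: "rho_rank_le n k a b A s \<Longrightarrow> s \<le> s' \<Longrightarrow> rho_rank_le n k a b A s'"
  by (elim rho_rank_leE, rule rho_rank_leI) auto

lemma rho_rank_le_cong:
  "rho_rank_le n k a b A s \<Longrightarrow> (\<And>xs. xs \<in> tdom n (2 * k) \<Longrightarrow> A xs = A' xs) \<Longrightarrow> rho_rank_le n k a b A' s"
  by (elim rho_rank_leE, rule rho_rank_leI) auto

lemma rho_rank_le_zero: "rho_rank_le n k a b (\<lambda>_. 0) 0"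
  by (rule rho_rank_leI[where X="\<lambda>_ _. 0" and r="\<lambda>_. 0"]) (auto simp: sep_rank_le_zero)

lemma rho_rank_le_add:
  assumes "rho_rank_le n k a b A s" "rho_rank_le n k a b B t"
  shows "rho_rank_le n k a b (\<lambda>xs. A xs + B xs) (s + t)"
proof -
  obtain X r where 1: "\<And>xs. xs \<in> tdom n (2 * k) \<Longrightarrow> A xs = (\<Sum>\<alpha>\<in>alphas k. X \<alpha> xs)"
    "\<And>\<alpha>. \<alpha> \<in> alphas k \<Longrightarrow> sep_rank_le n (2 * k) (Ipart k a \<alpha> b) (Jpart k a \<alpha> b) (X \<alpha>) (r \<alpha>)"
    "real (\<Sum>\<alpha>\<in>alphas k. r \<alpha>) \<le> s"
    using assms(1) by (rule rho_rank_leE) blast+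
  obtain Y q where 2: "\<And>xs. xs \<in> tdom n (2 * k) \<Longrightarrow> B xs = (\<Sum>\<alpha>\<in>alphas k. Y \<alpha> xs)"
    "\<And>\<alpha>. \<alpha> \<in> alphas k \<Longrightarrow> sep_rank_le n (2 * k) (Ipart k a \<alpha> b) (Jpart k a \<alpha> b) (Y \<alpha>) (q \<alpha>)"
    "real (\<Sum>\<alpha>\<in>alphas k. q \<alpha>) \<le> t"
    using assms(2) by (rule rho_rank_leE) blast+
  show ?thesis
    by (rule rho_rank_leI[where X="\<lambda>\<alpha> xs. X \<alpha> xs + Y \<alpha> xs" and r="\<lambda>\<alpha>. r \<alpha> + q \<alpha>"])
      (use 1 2 in \<open>simp_all add: sum.distrib sep_rank_le_add\<close>)
qed

lemma rho_rank_le_sum: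
  assumes "finite F" "\<And>i. i \<in> F \<Longrightarrow> rho_rank_le n k a b (A i) (s i)"
  shows "rho_rank_le n k a b (\<lambda>xs. \<Sum>i\<in>F. A i xs) (\<Sum>i\<in>F. s i)"
  using assms
proof (induction F rule: finite_induct)
  case empty
  then show ?case using rho_rank_le_zero by simp
next
  case (insert i F)
  then show ?case using rho_rank_le_add[of n k a b "A i" "s i"] by simp
qed

lemma rho_rank_le_single:
  assumes "\<alpha> \<in> alphas k" "sep_rank_le n (2 * k) (Ipart k a \<alpha> b) (Jpart k a \<alpha> b) A r"
  shows "rho_rank_le n k a b A r"
proof (rule rho_rank_leI[where X="\<lambda>\<beta>. if \<beta> = \<alpha> then A else (\<lambda>_. 0)" and r="\<lambda>\<beta>. if \<beta> = \<alpha> then r else 0"])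
  show "A xs = (\<Sum>\<beta>\<in>alphas k. (if \<beta> = \<alpha> then A else (\<lambda>_. 0)) xs)" for xs
    using assms(1) finite_alphas by (simp add: if_distrib[where f="\<lambda>X. X xs"] cong: if_cong)
  show "real (\<Sum>\<beta>\<in>alphas k. if \<beta> = \<alpha> then r else 0) \<le> real r"
    using assms(1) finite_alphas by simp
qed (use assms(2) sep_rank_le_zero in auto)

lemma rho_rank_le_pow_min_card:
  assumes "\<alpha> \<in> alphas k" "a \<le> 1" "b \<le> 1"
  shows "rho_rank_le n k a b A (real (n ^ min (card (Ipart k a \<alpha> b)) (card (Jpart k a \<alpha> b))))"
proof (rule rho_rank_le_single[OF assms(1)])
  show "sep_rank_le n (2 * k) (Ipart k a \<alpha> b) (Jpart k a \<alpha> b) A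
      (n ^ min (card (Ipart k a \<alpha> b)) (card (Jpart k a \<alpha> b)))"
    by (rule sep_rank_le_pow_min_card[OF _ Ipart_subset Jpart_subset])
      (use Ipart_Jpart_cover[OF assms] in blast)
qed

lemma rho_rank_le_unbalanced:
  assumes "n \<ge> 1" "(a = 1 \<and> b = 0) \<or> (a = 0 \<and> b = 1)"
  shows "rho_rank_le n k a b A (real n ^ (k - 1))"
proof -
  define \<alpha> where "\<alpha> = replicate (k - 1) (0::nat)"
  have \<alpha>: "\<alpha> \<in> alphas k" unfolding alphas_def \<alpha>_def by auto
  have "n ^ min (card (Ipart k a \<alpha> b)) (card (Jpart k a \<alpha> b)) \<le> n ^ (k - 1)"
    using min_card_parts_unbalanced[OF \<alpha> assms(2)] assms(1) by (rule power_increasing)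
  then have "real (n ^ min (card (Ipart k a \<alpha> b)) (card (Jpart k a \<alpha> b))) \<le> real n ^ (k - 1)"
    by (metis of_nat_le_iff of_nat_power)
  moreover have "a \<le> 1" "b \<le> 1" using assms(2) by auto
  ultimately show ?thesis
    using rho_rank_le_pow_min_card[OF \<alpha>] rho_rank_le_mono by blast
qed

lemma rho_rank_le_order_one:
  assumes "n \<ge> 1" "a \<le> 1" "b \<le> 1"
  shows "rho_rank_le n 1 a b A (real n)"
proof -
  have \<alpha>: "[] \<in> alphas 1" unfolding alphas_def by simp
  have "n ^ min (card (Ipart 1 a [] b)) (card (Jpart 1 a [] b)) \<le> n ^ 1"
    using min_card_parts_order_one[OF \<alpha> assms(2,3)] assms(1) by (rule power_increasing)
  then have "real (n ^ min (card (Ipart 1 a [] b)) (card (Jpart 1 a [] b))) \<le> real n"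
    by (metis of_nat_le_iff power_one_right)
  then show ?thesis
    using rho_rank_le_pow_min_card[OF \<alpha> assms(2,3)] rho_rank_le_mono by blast
qed

lemma sep_rank_le_tprod_alphas:
  assumes "\<alpha> \<in> alphas (e + f)" "1 \<le> e" "1 \<le> f" "a \<le> 1" "b \<le> 1" "c \<le> 1"
    and "\<And>\<beta>. \<beta> \<in> alphas e \<Longrightarrow> sep_rank_le n (2 * e) (Ipart e a \<beta> c) (Jpart e a \<beta> c) (X \<beta>) (r \<beta>)"
    and "\<And>\<gamma>. \<gamma> \<in> alphas f \<Longrightarrow> sep_rank_le n (2 * f) (Ipart f c \<gamma> b) (Jpart f c \<gamma> b) (Y \<gamma>) (q \<gamma>)"
  shows "sep_rank_le n (2 * (e + f)) (Ipart (e + f) a \<alpha> b) (Jpart (e + f) a \<alpha> b)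
    (if \<alpha> ! (e - 1) = c then tprod (2 * e) (X (take (e - 1) \<alpha>)) (Y (drop e \<alpha>)) else (\<lambda>_. 0))
    (if \<alpha> ! (e - 1) = c then r (take (e - 1) \<alpha>) * q (drop e \<alpha>) else 0)"
proof (cases "\<alpha> ! (e - 1) = c")
  case True
  define \<beta> \<gamma> where "\<beta> = take (e - 1) \<alpha>" and "\<gamma> = drop e \<alpha>"
  have split: "\<alpha> = \<beta> @ c # \<gamma>" "\<beta> \<in> alphas e" "\<gamma> \<in> alphas f"
    using alphas_split_at[OF assms(1-3)] True unfolding \<beta>_def \<gamma>_def by simp_all
  have "Ipart (e + f) a \<alpha> b = Ipart e a \<beta> c \<union> (+) (2 * e) ` Ipart f c \<gamma> b"
    "Jpart (e + f) a \<alpha> b = Jpart e a \<beta> c \<union> (+) (2 * e) ` Jpart f c \<gamma> b"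
    using Ipart_append[OF split(2,3) assms(2-6)] Jpart_append[OF split(2,3) assms(2-6)] split(1) by simp_all
  then show ?thesis
    unfolding if_P[OF True] \<beta>_def[symmetric] \<gamma>_def[symmetric]
    using sep_rank_le_tprod[OF assms(7)[OF split(2)] assms(8)[OF split(3)] Ipart_subset Jpart_subset Ipart_subset Jpart_subset]
    by (simp add: distrib_left)
qed (simp add: sep_rank_le_zero)

lemma rho_rank_le_tprod:
  fixes X Y :: "nat list \<Rightarrow> 'a::field"
  assumes "rho_rank_le n e a c X s" "rho_rank_le n f c b Y t"
    and "1 \<le> e" "1 \<le> f" "a \<le> 1" "b \<le> 1" "c \<le> 1"
  shows "rho_rank_le n (e + f) a b (tprod (2 * e) X Y) (s * t)"
proof -
  obtain XX r where X: "\<And>xs. xs \<in> tdom n (2 * e) \<Longrightarrow> X xs = (\<Sum>\<beta>\<in>alphas e. XX \<beta> xs)"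
    "\<And>\<beta>. \<beta> \<in> alphas e \<Longrightarrow> sep_rank_le n (2 * e) (Ipart e a \<beta> c) (Jpart e a \<beta> c) (XX \<beta>) (r \<beta>)"
    "real (\<Sum>\<beta>\<in>alphas e. r \<beta>) \<le> s"
    using assms(1) by (rule rho_rank_leE) blast+
  obtain YY q where Y: "\<And>xs. xs \<in> tdom n (2 * f) \<Longrightarrow> Y xs = (\<Sum>\<gamma>\<in>alphas f. YY \<gamma> xs)"
    "\<And>\<gamma>. \<gamma> \<in> alphas f \<Longrightarrow> sep_rank_le n (2 * f) (Ipart f c \<gamma> b) (Jpart f c \<gamma> b) (YY \<gamma>) (q \<gamma>)"
    "real (\<Sum>\<gamma>\<in>alphas f. q \<gamma>) \<le> t"
    using assms(2) by (rule rho_rank_leE) blast+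
  show ?thesis
  proof (rule rho_rank_leI[OF _ sep_rank_le_tprod_alphas[OF _ assms(3-7) X(2) Y(2)]])
    fix xs assume "xs \<in> tdom n (2 * (e + f))"
    then have xs: "take (2 * e) xs \<in> tdom n (2 * e)" "drop (2 * e) xs \<in> tdom n (2 * f)"
      by (simp_all add: tdom_take tdom_drop distrib_left)
    have "tprod (2 * e) X Y xs = (\<Sum>\<beta>\<in>alphas e. \<Sum>\<gamma>\<in>alphas f. tprod (2 * e) (XX \<beta>) (YY \<gamma>) xs)"
      unfolding tprod_def X(1)[OF xs(1)] Y(1)[OF xs(2)] by (rule sum_product)
    also have "\<dots> = (\<Sum>\<alpha>\<in>alphas (e + f). if \<alpha> ! (e - 1) = c
        then tprod (2 * e) (XX (take (e - 1) \<alpha>)) (YY (drop e \<alpha>)) xs else 0)"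
      by (rule sum_alphas_append[OF assms(3,4,7), symmetric])
    finally show "tprod (2 * e) X Y xs = (\<Sum>\<alpha>\<in>alphas (e + f).
        (if \<alpha> ! (e - 1) = c then tprod (2 * e) (XX (take (e - 1) \<alpha>)) (YY (drop e \<alpha>)) else (\<lambda>_. 0)) xs)"
      by (simp only: if_distrib[where f="\<lambda>F. F xs"])
  next
    have "(\<Sum>\<alpha>\<in>alphas (e + f). if \<alpha> ! (e - 1) = c then r (take (e - 1) \<alpha>) * q (drop e \<alpha>) else 0)
        = (\<Sum>\<beta>\<in>alphas e. r \<beta>) * (\<Sum>\<gamma>\<in>alphas f. q \<gamma>)"
      unfolding sum_product by (rule sum_alphas_append[OF assms(3,4,7)])
    then have "real (\<Sum>\<alpha>\<in>alphas (e + f). if \<alpha> ! (e - 1) = c then r (take (e - 1) \<alpha>) * q (drop e \<alpha>) else 0)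
        = real (\<Sum>\<beta>\<in>alphas e. r \<beta>) * real (\<Sum>\<gamma>\<in>alphas f. q \<gamma>)"
      by (simp only: of_nat_mult)
    also have "\<dots> \<le> s * t"
      using X(3) Y(3) order_trans[OF of_nat_0_le_iff X(3)] by (rule mult_mono) (simp add: sum_nonneg)
    finally show "real (\<Sum>\<alpha>\<in>alphas (e + f). if \<alpha> ! (e - 1) = c then r (take (e - 1) \<alpha>) * q (drop e \<alpha>) else 0)
        \<le> s * t" .
  qed
qed

lemma INF_sum_relrk_le:
  fixes A :: "nat list \<Rightarrow> 'a::field"
  assumes "1 \<le> n" "a \<le> 1" "b \<le> 1" "rho_rank_le n d a b A s"
  shows "(INF X\<in>{X :: nat list \<Rightarrow> nat list \<Rightarrow> 'a. \<forall>xs\<in>tdom n (2 * d). A xs = (\<Sum>\<alpha>\<in>alphas d. X \<alpha> xs)}.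
      \<Sum>\<alpha>\<in>alphas d. relrk n d a \<alpha> b (X \<alpha>)) \<le> s / real n ^ d"
proof -
  obtain X r where X: "\<And>xs. xs \<in> tdom n (2 * d) \<Longrightarrow> A xs = (\<Sum>\<alpha>\<in>alphas d. X \<alpha> xs)"
    "\<And>\<alpha>. \<alpha> \<in> alphas d \<Longrightarrow> sep_rank_le n (2 * d) (Ipart d a \<alpha> b) (Jpart d a \<alpha> b) (X \<alpha>) (r \<alpha>)"
    "real (\<Sum>\<alpha>\<in>alphas d. r \<alpha>) \<le> s"
    using assms(4) by (rule rho_rank_leE) blast+
  have "(INF X\<in>{X :: nat list \<Rightarrow> nat list \<Rightarrow> 'a. \<forall>xs\<in>tdom n (2 * d). A xs = (\<Sum>\<alpha>\<in>alphas d. X \<alpha> xs)}.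
      \<Sum>\<alpha>\<in>alphas d. relrk n d a \<alpha> b (X \<alpha>)) \<le> (\<Sum>\<alpha>\<in>alphas d. relrk n d a \<alpha> b (X \<alpha>))"
    using X(1) by (intro cINF_lower bdd_belowI2[where m=0]) (auto simp: relrk_def sum_nonneg)
  also have "\<dots> \<le> (\<Sum>\<alpha>\<in>alphas d. real (r \<alpha>) / real n ^ d)"
  proof (rule sum_mono)
    fix \<alpha> assume \<alpha>: "\<alpha> \<in> alphas d"
    have "mrank (Mat_flat n (2 * d) (Ipart d a \<alpha> b) (Jpart d a \<alpha> b) (X \<alpha>)) \<le> r \<alpha>"
      using mrank_Mat_flat_le[OF assms(1) X(2)[OF \<alpha>] Ipart_subset Jpart_subset]
        Ipart_Jpart_disjoint[OF \<alpha> assms(2,3)] by blast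
    then show "relrk n d a \<alpha> b (X \<alpha>) \<le> real (r \<alpha>) / real n ^ d"
      unfolding relrk_def by (simp add: divide_right_mono)
  qed
  also have "\<dots> \<le> s / real n ^ d"
    using X(3) by (simp add: sum_divide_distrib[symmetric] divide_right_mono)
  finally show ?thesis .
qed

lemma rho_le_of_rho_rank_le:
  assumes "1 \<le> n" "\<And>a b. a \<le> 1 \<Longrightarrow> b \<le> 1 \<Longrightarrow> rho_rank_le n d a b A s"
  shows "rho n d A \<le> s / real n ^ d"
  unfolding rho_def using INF_sum_relrk_le[OF assms(1) _ _ assms(2)] by (auto intro!: Max.boundedI)

section \<open>Unflattening\<close>

definition unpair :: "nat \<Rightarrow> nat \<Rightarrow> nat list" where
  "unpair n y = [(y - 1) div n + 1, (y - 1) mod n + 1]"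

text \<open>\<open>encode_pairs\<close> inverts \<open>unpair\<close>, which is the pairing \<open>\<langle>x,y\<rangle> = (x - 1) n + y\<close> used by
  \<open>flatten\<close>.\<close>

fun encode_pairs :: "nat \<Rightarrow> nat list \<Rightarrow> nat list" where
  "encode_pairs n (x # y # xs) = ((x - 1) * n + y) # encode_pairs n xs"
| "encode_pairs n _ = []"

definition unflatten :: "nat \<Rightarrow> (nat list \<Rightarrow> 'a) \<Rightarrow> nat list \<Rightarrow> 'a" where
  "unflatten n B = (\<lambda>xs. B (encode_pairs n xs))"

lemma take_encode_pairs: "take e (encode_pairs n xs) = encode_pairs n (take (2 * e) xs)"
proof (induction n xs arbitrary: e rule: encode_pairs.induct)
  case (1 n x y xs)
  then show ?case by (cases e) simp_all
qed (simp_all add: take_Cons')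

lemma drop_encode_pairs: "drop e (encode_pairs n xs) = encode_pairs n (drop (2 * e) xs)"
proof (induction n xs arbitrary: e rule: encode_pairs.induct)
  case (1 n x y xs)
  then show ?case by (cases e) simp_all
qed (simp_all add: drop_Cons')

lemma unflatten_tprod: "unflatten n (tprod e B C) = tprod (2 * e) (unflatten n B) (unflatten n C)"
  unfolding unflatten_def tprod_def by (simp add: take_encode_pairs drop_encode_pairs)

lemma unpair_pair:
  assumes "x \<in> {1..n}" "y \<in> {1..n}"
  shows "(x - 1) * n + y \<in> {1..n\<^sup>2}" "unpair n ((x - 1) * n + y) = [x, y]"
proof -
  have "(x - 1) * n + y \<le> (n - 1) * n + n"
    using assms by (intro add_mono mult_right_mono) auto
  also have "\<dots> = n\<^sup>2" using assms by (simp add: power2_eq_square algebra_simps)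
  finally show "(x - 1) * n + y \<in> {1..n\<^sup>2}" using assms by simp
  have shift: "(x - 1) * n + y - 1 = (y - 1) + n * (x - 1)"
    using assms by (cases y) (auto simp: mult.commute)
  have "y - 1 < n" using assms by auto
  then have "((y - 1) + n * (x - 1)) div n = x - 1" "((y - 1) + n * (x - 1)) mod n = y - 1"
    by simp_all
  moreover have "1 \<le> x" "1 \<le> y" using assms by auto
  ultimately have "((y - 1) + n * (x - 1)) div n + 1 = x" "((y - 1) + n * (x - 1)) mod n + 1 = y"
    by linarith+
  then show "unpair n ((x - 1) * n + y) = [x, y]"
    unfolding unpair_def shift by (simp only:)
qed

lemma encode_pairs_tdom:
  "xs \<in> tdom n (2 * k) \<Longrightarrow>
    encode_pairs n xs \<in> tdom (n\<^sup>2) k \<and> concat (map (unpair n) (encode_pairs n xs)) = xs"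
proof (induction k arbitrary: xs)
  case (Suc k)
  have "length xs = Suc (Suc (2 * k))" using Suc.prems unfolding tdom_def by simp
  then obtain x y zs where xs: "xs = x # y # zs" by (auto simp: length_Suc_conv)
  then have zs: "zs \<in> tdom n (2 * k)" and xy: "x \<in> {1..n}" "y \<in> {1..n}"
    using Suc.prems unfolding tdom_def by auto
  show ?case
    using Suc.IH[OF zs] unpair_pair[OF xy] unfolding xs tdom_def by simp
qed (auto simp: tdom_def)

lemma unflatten_flatten:
  assumes "xs \<in> tdom n (2 * k)"
  shows "unflatten n (flatten n A) xs = A xs"
proof -
  have "concat (map (unpair n) (encode_pairs n xs)) = xs" using encode_pairs_tdom[OF assms] by simp
  then show ?thesis unfolding unflatten_def flatten_def unpair_def by simp
qed

section \<open>Formula size\<close>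

lemma Lupto_eq_Lncsm: "j < m \<Longrightarrow> Lupto N m j B = Lncsm N j B"
proof (induction m)
  case (Suc m)
  then show ?case unfolding Lncsm_def by (cases "j < m") (simp_all add: less_Suc_eq)
qed simp

lemma Lncsm_order_one: "Lncsm N 1 B = (if \<exists>xs\<in>tdom N 1. B xs \<noteq> 0 then 1 else 0)"
  unfolding Lncsm_def by (simp add: Lstep_def)

lemma tensor_split_first_coordinate:
  fixes B :: "nat list \<Rightarrow> 'a::field"
  assumes "xs \<in> tdom N (Suc k)"
  shows "B xs = (\<Sum>i<N. tprod 1 (\<lambda>ys. if ys = [Suc i] then 1 else 0) (\<lambda>ys. B (Suc i # ys)) xs)"
proof -
  obtain x zs where xs: "xs = x # zs" and x: "x \<in> {1..N}"
    using assms unfolding tdom_def by (cases xs) auto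
  have "(\<Sum>i<N. tprod 1 (\<lambda>ys. if ys = [Suc i] then 1 else 0) (\<lambda>ys. B (Suc i # ys)) xs)
      = (\<Sum>i<N. if i = x - 1 then B xs else 0)"
    using x unfolding xs tprod_def by (intro sum.cong) auto
  also have "\<dots> = B xs"
  proof -
    have "x - 1 < N" using x by auto
    then show ?thesis by simp
  qed
  finally show ?thesis ..
qed

lemma Lncsm_optimal_decomposition:
  fixes B :: "nat list \<Rightarrow> 'a::field"
  assumes "2 \<le> k"
  obtains m :: nat and e f Bs Cs where "\<And>i. i < m \<Longrightarrow> 0 < e i \<and> 0 < f i \<and> e i + f i = k"
    "\<And>xs. xs \<in> tdom N k \<Longrightarrow> B xs = (\<Sum>i<m. tprod (e i) (Bs i) (Cs i) xs)"
    "Lncsm N k B = (\<Sum>i<m. Lncsm N (e i) (Bs i) + Lncsm N (f i) (Cs i))"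
proof -
  let ?S = "{\<Sum>i<m. Lupto N k (e i) (Bs i) + Lupto N k (f i) (Cs i) | (m::nat) e f Bs Cs.
      (\<forall>i<m. 0 < e i \<and> 0 < f i \<and> e i + f i = k) \<and>
      (\<forall>xs\<in>tdom N k. B xs = (\<Sum>i<m. tprod (e i) (Bs i) (Cs i) xs))}"
  define Bs0 :: "nat \<Rightarrow> nat list \<Rightarrow> 'a" where "Bs0 = (\<lambda>i ys. if ys = [Suc i] then 1 else 0)"
  define Cs0 where "Cs0 = (\<lambda>i ys. B (Suc i # ys))"
  have "Lncsm N k B = Inf ?S"
    unfolding Lncsm_def using assms by (simp add: Lstep_def)
  \<comment> \<open>the infimum of a nonempty set of naturals is attained; splitting off the first coordinate
    shows nonemptiness\<close>
  moreover have "(\<Sum>i<N. Lupto N k 1 (Bs0 i) + Lupto N k (k - 1) (Cs0 i)) \<in> ?S"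
    by (rule CollectI, rule exI[of _ N], rule exI[of _ "\<lambda>_. 1"], rule exI[of _ "\<lambda>_. k - 1"],
        rule exI[of _ Bs0], rule exI[of _ Cs0])
      (use assms tensor_split_first_coordinate[of _ N "k - 1" B] in \<open>auto simp: Bs0_def Cs0_def\<close>)
  then have "Inf ?S \<in> ?S"
    by (intro Inf_nat_def1) blast
  ultimately have "Lncsm N k B \<in> ?S"
    by (simp only:)
  then obtain m :: nat and e f :: "nat \<Rightarrow> nat" and Bs Cs :: "nat \<Rightarrow> nat list \<Rightarrow> 'a"
    where parts: "\<forall>i<m. 0 < e i \<and> 0 < f i \<and> e i + f i = k"
    and "\<forall>xs\<in>tdom N k. B xs = (\<Sum>i<m. tprod (e i) (Bs i) (Cs i) xs)"
    and "Lncsm N k B = (\<Sum>i<m. Lupto N k (e i) (Bs i) + Lupto N k (f i) (Cs i))"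
    by blast
  moreover have "(\<Sum>i<m. Lupto N k (e i) (Bs i) + Lupto N k (f i) (Cs i)) =
      (\<Sum>i<m. Lncsm N (e i) (Bs i) + Lncsm N (f i) (Cs i))"
    using parts by (intro sum.cong) (auto simp: Lupto_eq_Lncsm)
  ultimately show ?thesis
    by (intro that[of m e f Bs Cs]) auto
qed

section \<open>The lower bound\<close>

lemma powr_log2_le_double:
  assumes "1 \<le> n" "1 \<le> e" "1 \<le> k" "k \<le> 2 * e"
  shows "real n powr log 2 (real k) \<le> real n * real n powr log 2 (real e)"
proof -
  have "log 2 (real k) \<le> log 2 (2 * real e)" using assms by simp
  also have "\<dots> = 1 + log 2 (real e)" using assms by (simp add: log_mult)
  finally have "real n powr log 2 (real k) \<le> real n powr (1 + log 2 (real e))"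
    using assms by (intro powr_mono) auto
  also have "\<dots> = real n * real n powr log 2 (real e)" using assms by (simp add: powr_add)
  finally show ?thesis .
qed

lemma cost_product_le:
  assumes "1 \<le> n" "1 \<le> f" "f \<le> e" "0 \<le> L" "0 \<le> L'"
  shows "L * real n ^ e / real n powr log 2 (real e) * real n ^ (f - 1)
        \<le> (L + L') * real n ^ (e + f) / real n powr log 2 (real (e + f))"
proof -
  have g: "real n powr log 2 (real (e + f)) \<le> real n * real n powr log 2 (real e)"
    by (rule powr_log2_le_double) (use assms in auto)
  have pos: "0 < real n powr log 2 (real (e + f))" using assms by simp
  have "real n ^ (e + f) = real n * (real n ^ e * real n ^ (f - 1))"
    using assms(2) by (simp flip: power_add power_Suc)
  then have "L * real n ^ e / real n powr log 2 (real e) * real n ^ (f - 1)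
      = L * real n ^ (e + f) / (real n * real n powr log 2 (real e))"
    using assms(1) by (simp add: field_simps)
  also have "\<dots> \<le> L * real n ^ (e + f) / real n powr log 2 (real (e + f))"
    using g pos assms(4) by (intro divide_left_mono) auto
  also have "\<dots> \<le> (L + L') * real n ^ (e + f) / real n powr log 2 (real (e + f))"
    using pos assms(5) by (intro divide_right_mono mult_right_mono) auto
  finally show ?thesis .
qed

lemma rho_rank_le_unflatten_tprod:
  fixes B C :: "nat list \<Rightarrow> 'a::field"
  assumes "1 \<le> n" "1 \<le> e" "1 \<le> f" "a \<le> 1" "b \<le> 1"
    and IH: "\<And>j (D :: nat list \<Rightarrow> 'a) a b. j \<in> {e, f} \<Longrightarrow> a \<le> 1 \<Longrightarrow> b \<le> 1 \<Longrightarrow>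
      rho_rank_le n j a b (unflatten n D) (Lncsm (n\<^sup>2) j D * real n ^ j / real n powr log 2 (real j))"
  shows "rho_rank_le n (e + f) a b (unflatten n (tprod e B C))
    ((Lncsm (n\<^sup>2) e B + Lncsm (n\<^sup>2) f C) * real n ^ (e + f) / real n powr log 2 (real (e + f)))"
proof (cases "f \<le> e")
  case True
  have "rho_rank_le n e a (1 - b) (unflatten n B)
      (Lncsm (n\<^sup>2) e B * real n ^ e / real n powr log 2 (real e))"
    using IH[where j=e and D=B] assms(4) by simp
  moreover have "rho_rank_le n f (1 - b) b (unflatten n C) (real n ^ (f - 1))"
    by (rule rho_rank_le_unbalanced[OF assms(1)]) (use assms(5) in auto)
  ultimately have "rho_rank_le n (e + f) a b (tprod (2 * e) (unflatten n B) (unflatten n C))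
      (Lncsm (n\<^sup>2) e B * real n ^ e / real n powr log 2 (real e) * real n ^ (f - 1))"
    using assms(2-5) by (rule rho_rank_le_tprod) simp
  then show ?thesis
    unfolding unflatten_tprod using cost_product_le[OF assms(1,3) True] by (auto elim: rho_rank_le_mono)
next
  case False
  have "rho_rank_le n e a (1 - a) (unflatten n B) (real n ^ (e - 1))"
    by (rule rho_rank_le_unbalanced[OF assms(1)]) (use assms(4) in auto)
  moreover have "rho_rank_le n f (1 - a) b (unflatten n C)
      (Lncsm (n\<^sup>2) f C * real n ^ f / real n powr log 2 (real f))"
    using IH[where j=f and D=C] assms(5) by simp
  ultimately have "rho_rank_le n (e + f) a b (tprod (2 * e) (unflatten n B) (unflatten n C))
      (real n ^ (e - 1) * (Lncsm (n\<^sup>2) f C * real n ^ f / real n powr log 2 (real f)))"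
    using assms(2-5) by (rule rho_rank_le_tprod) simp
  moreover have "real n ^ (e - 1) * (Lncsm (n\<^sup>2) f C * real n ^ f / real n powr log 2 (real f))
      \<le> (Lncsm (n\<^sup>2) e B + Lncsm (n\<^sup>2) f C) * real n ^ (e + f) / real n powr log 2 (real (e + f))"
    using cost_product_le[OF assms(1,2), of f "Lncsm (n\<^sup>2) f C" "Lncsm (n\<^sup>2) e B"] False
    by (simp add: ac_simps)
  ultimately show ?thesis
    unfolding unflatten_tprod by (rule rho_rank_le_mono)
qed

lemma rho_rank_le_unflatten_order_one:
  fixes B :: "nat list \<Rightarrow> 'a::field"
  assumes "1 \<le> n" "a \<le> 1" "b \<le> 1"
  shows "rho_rank_le n 1 a b (unflatten n B) (Lncsm (n\<^sup>2) 1 B * real n)"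
proof (cases "\<exists>ys\<in>tdom (n\<^sup>2) 1. B ys \<noteq> 0")
  case True
  then show ?thesis
    using rho_rank_le_order_one[OF assms] Lncsm_order_one[of "n\<^sup>2" B] by simp
next
  case False
  have "0 = unflatten n B xs" if "xs \<in> tdom n (2 * 1)" for xs
    using False encode_pairs_tdom[OF that] unfolding unflatten_def by auto
  then have "rho_rank_le n 1 a b (unflatten n B) 0"
    by (rule rho_rank_le_cong[OF rho_rank_le_zero])
  then show ?thesis
    using Lncsm_order_one[of "n\<^sup>2" B] False by simp
qed


lemma rho_rank_le_unflatten_step:
  fixes B :: "nat list \<Rightarrow> 'a::field"
  assumes "1 \<le> n" "2 \<le> k" "a \<le> 1" "b \<le> 1"
    and IH: "\<And>j (D :: nat list \<Rightarrow> 'a) a b. 1 \<le> j \<Longrightarrow> j < k \<Longrightarrow> a \<le> 1 \<Longrightarrow> b \<le> 1 \<Longrightarrow>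
      rho_rank_le n j a b (unflatten n D) (Lncsm (n\<^sup>2) j D * real n ^ j / real n powr log 2 (real j))"
  shows "rho_rank_le n k a b (unflatten n B) (Lncsm (n\<^sup>2) k B * real n ^ k / real n powr log 2 (real k))"
proof -
  obtain m :: nat and e f Bs Cs where parts: "\<And>i. i < m \<Longrightarrow> 0 < e i \<and> 0 < f i \<and> e i + f i = k"
    and decomp: "\<And>ys. ys \<in> tdom (n\<^sup>2) k \<Longrightarrow> B ys = (\<Sum>i<m. tprod (e i) (Bs i) (Cs i) ys)"
    and size: "Lncsm (n\<^sup>2) k B = (\<Sum>i<m. Lncsm (n\<^sup>2) (e i) (Bs i) + Lncsm (n\<^sup>2) (f i) (Cs i))"
    using Lncsm_optimal_decomposition[OF assms(2), of "n\<^sup>2" B] by blast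
  have terms: "rho_rank_le n k a b (\<lambda>xs. \<Sum>i<m. unflatten n (tprod (e i) (Bs i) (Cs i)) xs)
      (\<Sum>i<m. (Lncsm (n\<^sup>2) (e i) (Bs i) + Lncsm (n\<^sup>2) (f i) (Cs i)) * real n ^ k / real n powr log 2 (real k))"
  proof (rule rho_rank_le_sum)
    fix i assume "i \<in> {..<m}"
    then have ef: "e i + f i = k" "1 \<le> e i" "1 \<le> f i" using parts[of i] by auto
    have "rho_rank_le n (e i + f i) a b (unflatten n (tprod (e i) (Bs i) (Cs i)))
        ((Lncsm (n\<^sup>2) (e i) (Bs i) + Lncsm (n\<^sup>2) (f i) (Cs i)) * real n ^ (e i + f i)
          / real n powr log 2 (real (e i + f i)))"
      by (rule rho_rank_le_unflatten_tprod[OF assms(1) ef(2,3) assms(3,4)]) (use ef in \<open>auto intro!: IH\<close>)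
    then show "rho_rank_le n k a b (unflatten n (tprod (e i) (Bs i) (Cs i)))
        ((Lncsm (n\<^sup>2) (e i) (Bs i) + Lncsm (n\<^sup>2) (f i) (Cs i)) * real n ^ k / real n powr log 2 (real k))"
      by (simp only: ef(1))
  qed simp
  have "(\<Sum>i<m. unflatten n (tprod (e i) (Bs i) (Cs i)) xs) = unflatten n B xs"
    if "xs \<in> tdom n (2 * k)" for xs
    using decomp encode_pairs_tdom[OF that] unfolding unflatten_def by simp
  with terms have "rho_rank_le n k a b (unflatten n B)
      (\<Sum>i<m. (Lncsm (n\<^sup>2) (e i) (Bs i) + Lncsm (n\<^sup>2) (f i) (Cs i)) * real n ^ k / real n powr log 2 (real k))"
    by (rule rho_rank_le_cong)
  then show ?thesis
    unfolding size by (simp add: sum_divide_distrib[symmetric] sum_distrib_right[symmetric])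
qed


lemma rho_rank_le_unflatten:
  fixes B :: "nat list \<Rightarrow> 'a::field"
  assumes "1 \<le> n" "1 \<le> k" "a \<le> 1" "b \<le> 1"
  shows "rho_rank_le n k a b (unflatten n B) (Lncsm (n\<^sup>2) k B * real n ^ k / real n powr log 2 (real k))"
  using assms(2-4)
proof (induction k arbitrary: B a b rule: less_induct)
  case (less k)
  show ?case
  proof (cases "k = 1")
    case True
    then show ?thesis
      using rho_rank_le_unflatten_order_one[OF assms(1) less.prems(2,3)] assms(1) by simp
  next
    case False
    with less.prems(1) have "2 \<le> k" by simp
    then show ?thesis
      by (rule rho_rank_le_unflatten_step[OF assms(1) _ less.prems(2,3)]) (auto intro: less.IH)
  qed
qed

theorem theorem4p11:
  fixes A :: "nat list \<Rightarrow> 'a::field" and n d :: nat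
  assumes "n \<ge> 1" and "d \<ge> 1"
  shows "real (Lncsm (n^2) d (flatten n A)) \<ge> real n powr log 2 (real d) * rho n d A"
proof -
  let ?L = "real (Lncsm (n\<^sup>2) d (flatten n A))" and ?g = "real n powr log 2 (real d)"
  have "rho n d A \<le> ?L * real n ^ d / ?g / real n ^ d"
  proof (rule rho_le_of_rho_rank_le[OF assms(1)])
    fix a b :: nat assume "a \<le> 1" "b \<le> 1"
    with assms have "rho_rank_le n d a b (unflatten n (flatten n A)) (?L * real n ^ d / ?g)"
      by (intro rho_rank_le_unflatten)
    then show "rho_rank_le n d a b A (?L * real n ^ d / ?g)"
      by (rule rho_rank_le_cong) (rule unflatten_flatten)
  qed
  moreover have "0 < ?g" "0 < real n ^ d" using assms(1) by auto
  ultimately show ?thesis by (simp add: field_simps)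
qed

end
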